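(* Let $\alpha\in\mathbb{N}_0$. For all $y\in C^{(2\alpha+4)}(0,\infty)$ and $x>0$, $$(-1)^{\alpha+1}x^2(x^{-1}D_x)^{2\alpha+4}\big[x^{2\alpha+2}y(x)\big]=(-1)^{\alpha+1}\sum_{i=1}^{2\alpha+4}A_i^{\alpha}x^{i-2\alpha-4}D_x^iy(x),$$ where $$A_i^{\alpha}=\frac{(\alpha+1)!}{(i-1)!}\sum_{j=\max(i,\alpha+3)}^{2\alpha+4}(-1)^{i+j}\binom{2\alpha+4}{j}\frac{(2j-i-1)!\,2^{i-2j+2\alpha+4}}{(j-\alpha-3)!\,(j-i)!}.$$
   Context: $D_x^i$ is the $i$-fold derivative; $(x^{-1}D_x)^k$ is the $k$-fold application of $y\mapsto x^{-1}y'$. *)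

theory Defs
  imports "HOL-Analysis.Analysis"
begin

definition Dn :: "nat \<Rightarrow> (real \<Rightarrow> real) \<Rightarrow> (real \<Rightarrow> real)" where
  "Dn i f = (deriv ^^ i) f"

definition Ck_on :: "nat \<Rightarrow> real set \<Rightarrow> (real \<Rightarrow> real) \<Rightarrow> bool" where
  "Ck_on k S f \<longleftrightarrow> (\<forall>i<k. \<forall>x\<in>S. Dn i f differentiable (at x)) \<and> continuous_on S (Dn k f)"

definition xinvD :: "(real \<Rightarrow> real) \<Rightarrow> (real \<Rightarrow> real)" where
  "xinvD f = (\<lambda>x. deriv f x / x)"

definition xinvD_pow :: "nat \<Rightarrow> (real \<Rightarrow> real) \<Rightarrow> (real \<Rightarrow> real)" where
  "xinvD_pow k f = (xinvD ^^ k) f"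

definition A_coeff :: "nat \<Rightarrow> nat \<Rightarrow> real" where
  "A_coeff \<alpha> i = fact (\<alpha>+1) / fact (i-1) *
     (\<Sum>j = max i (\<alpha>+3)..2*\<alpha>+4.
        (-1) ^ (i+j) * real (2*\<alpha>+4 choose j) *
        (fact (2*j-i-1) * (2::real) powi (int i - 2*int j + 2*int \<alpha> + 4))
        / (fact (j-\<alpha>-3) * fact (j-i)))"

end

theory Submission
  imports Defs
begin

text \<open>
  By induction on k, (x^-1 D)^k [x^p y] = \<Sum>_i c(p,k,i) x^(p-2k+i) D^i y, where the
  coefficients obey a Pascal-type recurrence. Since x^-1 D is a derivation and
  (x^-1 D)^n x^p = p(p-2)...(p-2n+2) x^(p-2n), the Leibniz rule writes c(p,k,i) as a binomial
  convolution of these falling products with the coefficients c(0,j,i), which are signed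
  Bessel polynomial coefficients (-1)^d (s+2d)! / (2^d s! d!). For p = 2\<alpha>+2 the falling
  product vanishes once n > \<alpha>+1; this restricts the convolution to j \<ge> \<alpha>+3, kills the
  coefficient of D^0 y, and leaves A_i^\<alpha>.
\<close>

text \<open>The coefficient of x^(p-2k+i) D^i y in (x^-1 D)^k [x^p y], see \<open>xinvD_pow_powi_mult\<close>.\<close>

fun xinvD_coeff :: "int \<Rightarrow> nat \<Rightarrow> nat \<Rightarrow> real" where
  "xinvD_coeff p 0 i = (if i = 0 then 1 else 0)"
| "xinvD_coeff p (Suc k) i = of_int (p - 2 * int k + int i) * xinvD_coeff p k i
     + (if i = 0 then 0 else xinvD_coeff p k (i - 1))"

lemma xinvD_coeff_eq_0: "k < i \<Longrightarrow> xinvD_coeff p k i = 0"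
  by (induction k arbitrary: i) auto

lemma xinvD_coeff_0_Suc_0: "xinvD_coeff 0 (Suc j) 0 = 0"
  by (induction j) auto

lemma xinvD_coeff_diag: "xinvD_coeff p j j = 1"
  by (induction j) (auto simp: xinvD_coeff_eq_0)

lemma Dn_Suc: "Dn (Suc i) y = deriv (Dn i y)"
  by (simp add: Dn_def)

lemma xinvD_pow_Suc: "xinvD_pow (Suc k) f = xinvD (xinvD_pow k f)"
  by (simp add: xinvD_pow_def)

lemma has_real_derivative_powi_mult_Dn:
  assumes "Dn i y differentiable (at x)" and "x \<noteq> 0"
  shows "((\<lambda>t. t powi q * Dn i y t) has_real_derivative
           of_int q * x powi (q - 1) * Dn i y x + x powi q * Dn (Suc i) y x) (at x)"
proof -
  have "(Dn i y has_real_derivative Dn (Suc i) y x) (at x)"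
    using assms(1) by (simp add: Dn_Suc DERIV_deriv_iff_real_differentiable)
  then show ?thesis
    using assms(2) by (auto intro!: derivative_eq_intros simp: algebra_simps)
qed

lemma powi_diff_1_divide:
  fixes x :: real
  assumes "x \<noteq> 0"
  shows "x powi q / x = x powi (q - 1)"
  using power_int_diff[of x q 1] assms by simp

lemma xinvD_sum_powi_mult_Dn:
  assumes diff: "\<And>i. i \<le> k \<Longrightarrow> Dn i y differentiable (at x)" and x: "x \<noteq> 0"
    and f: "eventually (\<lambda>t. f t = (\<Sum>i\<le>k. c i * t powi q i * Dn i y t)) (nhds x)"
  shows "xinvD f x = (\<Sum>i\<le>k. c i * (of_int (q i) * x powi (q i - 2) * Dn i y x
                                      + x powi (q i - 1) * Dn (Suc i) y x))"
proof -
  have "(f has_real_derivative (\<Sum>i\<le>k. c i * (of_int (q i) * x powi (q i - 1) * Dn i y x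
                                      + x powi (q i) * Dn (Suc i) y x))) (at x)"
    unfolding DERIV_cong_ev[OF refl f refl] mult.assoc
    by (intro DERIV_sum DERIV_cmult
          has_real_derivative_powi_mult_Dn[OF diff x, unfolded mult.assoc]) simp
  then have "xinvD f x = (\<Sum>i\<le>k. c i * (of_int (q i) * x powi (q i - 1) * Dn i y x
                                      + x powi (q i) * Dn (Suc i) y x)) / x"
    by (simp add: xinvD_def DERIV_imp_deriv)
  also have "\<dots> = (\<Sum>i\<le>k. c i * (of_int (q i) * (x powi (q i - 1) / x) * Dn i y x
                                      + x powi (q i) / x * Dn (Suc i) y x))"
    using x by (auto simp: sum_divide_distrib field_simps intro!: sum.cong)
  finally show ?thesis
    using x by (simp add: powi_diff_1_divide)
qed

lemma xinvD_coeff_Suc_sum: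
  fixes D :: "nat \<Rightarrow> real"
  shows "(\<Sum>i\<le>Suc k. xinvD_coeff p (Suc k) i * x powi (p - 2 * int (Suc k) + int i) * D i)
    = (\<Sum>i\<le>k. xinvD_coeff p k i
           * (of_int (p - 2 * int k + int i) * x powi (p - 2 * int k + int i - 2) * D i
              + x powi (p - 2 * int k + int i - 1) * D (Suc i)))"
proof -
  have "(\<Sum>i\<le>Suc k. of_int (p - 2 * int k + int i) * xinvD_coeff p k i
                       * x powi (p - 2 * int (Suc k) + int i) * D i)
      = (\<Sum>i\<le>k. xinvD_coeff p k i * of_int (p - 2 * int k + int i)
                   * x powi (p - 2 * int k + int i - 2) * D i)"
    by (simp add: xinvD_coeff_eq_0 algebra_simps)
  moreover have "(\<Sum>i\<le>Suc k. (if i = 0 then 0 else xinvD_coeff p k (i - 1))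
                               * x powi (p - 2 * int (Suc k) + int i) * D i)
      = (\<Sum>i\<le>k. xinvD_coeff p k i * x powi (p - 2 * int k + int i - 1) * D (Suc i))"
    by (subst sum.atMost_Suc_shift) (simp add: algebra_simps)
  ultimately show ?thesis
    by (simp add: distrib_left distrib_right sum.distrib mult.assoc)
qed

lemma xinvD_pow_powi_mult:
  assumes "\<And>i t. i < k \<Longrightarrow> t > 0 \<Longrightarrow> Dn i y differentiable (at t)" and "x > 0"
  shows "xinvD_pow k (\<lambda>t. t powi p * y t) x
           = (\<Sum>i\<le>k. xinvD_coeff p k i * x powi (p - 2 * int k + int i) * Dn i y x)"
  using assms
proof (induction k arbitrary: x)
  case 0
  show ?case by (simp add: xinvD_pow_def Dn_def)
next
  case (Suc k)
  let ?f = "xinvD_pow k (\<lambda>t. t powi p * y t)" and ?q = "\<lambda>i. p - 2 * int k + int i"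
  have "eventually (\<lambda>t. t > 0) (nhds x)"
    using Suc.prems(2) by (rule eventually_nhds_in_open[OF open_greaterThan, simplified])
  then have ev: "eventually (\<lambda>t. ?f t = (\<Sum>i\<le>k. xinvD_coeff p k i * t powi ?q i * Dn i y t))
                   (nhds x)"
    by eventually_elim (use Suc in auto)
  have "xinvD ?f x = (\<Sum>i\<le>k. xinvD_coeff p k i * (of_int (?q i) * x powi (?q i - 2) * Dn i y x
                                                 + x powi (?q i - 1) * Dn (Suc i) y x))"
    by (rule xinvD_sum_powi_mult_Dn[where q = ?q, OF _ _ ev]) (use Suc.prems in auto)
  then show ?case
    unfolding xinvD_pow_Suc xinvD_coeff_Suc_sum .
qed

text \<open>(x^-1 D)^n x^p = falling_fact2 p n \<cdot> x^(p-2n).\<close>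

definition falling_fact2 :: "int \<Rightarrow> nat \<Rightarrow> real" where
  "falling_fact2 p n = (\<Prod>l<n. of_int (p - 2 * int l))"

lemma falling_fact2_0 [simp]: "falling_fact2 p 0 = 1"
  by (simp add: falling_fact2_def)

lemma falling_fact2_Suc: "falling_fact2 p (Suc n) = of_int (p - 2 * int n) * falling_fact2 p n"
  by (simp add: falling_fact2_def)

text \<open>The Leibniz rule for the derivation x^-1 D applied to x^p \<cdot> y, read off on coefficients.\<close>

lemma xinvD_coeff_binomial:
  "xinvD_coeff p k r = (\<Sum>j\<le>k. real (k choose j) * falling_fact2 p (k - j) * xinvD_coeff 0 j r)"
proof (induction k arbitrary: r)
  case 0
  show ?case by simp
next
  case (Suc k)
  let ?F = "falling_fact2 p" and ?b = "xinvD_coeff 0"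
  have shift: "(\<Sum>j\<le>k. real (k choose j) * ?F (Suc k - j) * ?b j r)
      = ?F (Suc k) * ?b 0 r + (\<Sum>j\<le>k. real (k choose Suc j) * ?F (k - j) * ?b (Suc j) r)"
  proof -
    have "(\<Sum>j\<le>k. real (k choose j) * ?F (Suc k - j) * ?b j r)
        = (\<Sum>j\<le>Suc k. real (k choose j) * ?F (Suc k - j) * ?b j r)"
      by simp
    then show ?thesis
      by (simp add: sum.atMost_Suc_shift del: sum.atMost_Suc)
  qed
  have "(\<Sum>j\<le>Suc k. real (Suc k choose j) * ?F (Suc k - j) * ?b j r)
      = (\<Sum>j\<le>k. real (k choose j) * ?F (Suc k - j) * ?b j r)
        + (\<Sum>j\<le>k. real (k choose j) * ?F (k - j) * ?b (Suc j) r)"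
    unfolding shift
    by (simp add: sum.atMost_Suc_shift sum.distrib algebra_simps
             del: sum.atMost_Suc xinvD_coeff.simps)
  also have "\<dots> = (\<Sum>j\<le>k. real (k choose j) * ?F (k - j)
                 * (of_int (p - 2 * int k + int r) * ?b j r + (if r = 0 then 0 else ?b j (r - 1))))"
    unfolding sum.distrib[symmetric]
  proof (rule sum.cong[OF refl])
    fix j assume "j \<in> {..k}"
    then have "Suc k - j = Suc (k - j)" and "int (k - j) = int k - int j" by auto
    then show "real (k choose j) * ?F (Suc k - j) * ?b j r
          + real (k choose j) * ?F (k - j) * ?b (Suc j) r
        = real (k choose j) * ?F (k - j)
          * (of_int (p - 2 * int k + int r) * ?b j r + (if r = 0 then 0 else ?b j (r - 1)))"
      by (simp add: falling_fact2_Suc algebra_simps)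
  qed
  also have "\<dots> = xinvD_coeff p (Suc k) r"
    by (cases "r = 0") (simp_all add: Suc.IH sum_distrib_left sum.distrib distrib_left ac_simps)
  finally show ?case ..
qed

lemma falling_fact2_even:
  "falling_fact2 (2 * int m) n = (if n \<le> m then 2 ^ n * fact m / fact (m - n) else 0)"
proof (induction n)
  case 0
  show ?case by simp
next
  case (Suc n)
  show ?case
  proof (cases "Suc n \<le> m")
    case True
    have "falling_fact2 (2 * int m) (Suc n) = 2 * (real m - real n) * falling_fact2 (2 * int m) n"
      by (simp add: falling_fact2_Suc)
    also have "falling_fact2 (2 * int m) n = 2 ^ n * fact m / fact (m - n)"
      using Suc.IH True by simp
    also have "fact (m - n) = (real m - real n) * fact (m - Suc n)"
      by (metis Suc_diff_Suc fact_Suc of_nat_fact Suc_le_lessD of_nat_diff Suc_leD True)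
    also have "2 * (real m - real n) * (2 ^ n * fact m / ((real m - real n) * fact (m - Suc n)))
        = 2 ^ Suc n * fact m / fact (m - Suc n)"
      using True by (simp add: field_simps)
    finally show ?thesis
      using True by simp
  next
    case False
    then show ?thesis
      using Suc.IH by (cases "n = m") (auto simp: falling_fact2_Suc)
  qed
qed

text \<open>Up to the sign (-1)^d, the coefficient of z^s in the reverse Bessel polynomial \<theta>_(s+d)(z).\<close>

definition bessel_coeff :: "nat \<Rightarrow> nat \<Rightarrow> real" where
  "bessel_coeff s d = (-1) ^ d * fact (s + 2 * d) / (2 ^ d * fact s * fact d)"

lemma bessel_coeff_0_Suc: "bessel_coeff 0 (Suc d) = - (1 + 2 * real d) * bessel_coeff 0 d"
proof -
  have "fact (2 * Suc d) = (2 * real d + 2) * (2 * real d + 1) * (fact (2 * d) :: real)"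
    by (simp add: fact_Suc algebra_simps)
  then show ?thesis
    by (simp add: bessel_coeff_def divide_simps) (simp add: algebra_simps)
qed

lemma bessel_coeff_Suc_Suc:
  "bessel_coeff (Suc s) (Suc d)
     = - (real s + 2 + 2 * real d) * bessel_coeff (Suc s) d + bessel_coeff s (Suc d)"
proof -
  have "fact (Suc s + 2 * Suc d)
          = (real s + 2 * real d + 3) * (real s + 2 * real d + 2) * (fact (s + 1 + 2 * d) :: real)"
    and "fact (s + 2 * Suc d) = (real s + 2 * real d + 2) * (fact (s + 1 + 2 * d) :: real)"
    by (simp_all add: fact_Suc algebra_simps)
  then show ?thesis
    by (simp add: bessel_coeff_def divide_simps) (simp add: algebra_simps)
qed

lemma xinvD_coeff_0_eq_bessel_coeff: "xinvD_coeff 0 (Suc s + d) (Suc s) = bessel_coeff s d"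
proof (induction d arbitrary: s)
  case 0
  show ?case by (simp add: xinvD_coeff_diag bessel_coeff_def)
next
  case (Suc d)
  note IH_d = Suc.IH
  show ?case
  proof (induction s)
    case 0
    have "xinvD_coeff 0 (Suc 0 + Suc d) (Suc 0)
        = - (1 + 2 * real d) * xinvD_coeff 0 (Suc 0 + d) (Suc 0)"
      by (subst add_Suc_right, subst xinvD_coeff.simps(2))
        (simp add: xinvD_coeff_0_Suc_0 algebra_simps del: xinvD_coeff.simps)
    then show ?case
      using IH_d[of 0] bessel_coeff_0_Suc by simp
  next
    case (Suc s)
    have "xinvD_coeff 0 (Suc (Suc s) + Suc d) (Suc (Suc s))
        = - (real s + 2 + 2 * real d) * xinvD_coeff 0 (Suc (Suc s) + d) (Suc (Suc s))
          + xinvD_coeff 0 (Suc s + Suc d) (Suc s)"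
      by (subst add_Suc_right, subst xinvD_coeff.simps(2))
        (simp add: algebra_simps del: xinvD_coeff.simps)
    then show ?case
      using Suc.IH IH_d[of "Suc s"] bessel_coeff_Suc_Suc by simp
  qed
qed

lemma xinvD_coeff_even_0:
  assumes "m < k"
  shows "xinvD_coeff (2 * int m) k 0 = 0"
proof -
  have summand_0: "real (k choose j) * falling_fact2 (2 * int m) (k - j) * xinvD_coeff 0 j 0 = 0"
    for j
    using assms
    by (cases j) (simp_all add: falling_fact2_even xinvD_coeff_0_Suc_0 del: xinvD_coeff.simps)
  show ?thesis
    by (subst xinvD_coeff_binomial) (simp only: summand_0 sum.neutral_const)
qed

lemma xinvD_coeff_even:
  assumes "1 \<le> i"
  shows "xinvD_coeff (2 * int m) k i = (\<Sum>j = max i (k - m)..k.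
           real (k choose j) * (2 ^ (k - j) * fact m / fact (m + j - k)) * bessel_coeff (i - 1) (j - i))"
    (is "_ = sum ?h _")
proof -
  let ?g = "\<lambda>j. real (k choose j) * falling_fact2 (2 * int m) (k - j) * xinvD_coeff 0 j i"
  have "xinvD_coeff (2 * int m) k i = (\<Sum>j\<le>k. ?g j)"
    by (rule xinvD_coeff_binomial)
  also have "\<dots> = (\<Sum>j = max i (k - m)..k. ?g j)"
    by (rule sum.mono_neutral_right) (auto simp: xinvD_coeff_eq_0 falling_fact2_even)
  also have "\<dots> = (\<Sum>j = max i (k - m)..k. ?h j)"
  proof (rule sum.cong[OF refl])
    fix j assume j: "j \<in> {max i (k - m)..k}"
    then have "j = Suc (i - 1) + (j - i)" "k - j \<le> m" "m - (k - j) = m + j - k"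
      using assms by auto
    then show "?g j = ?h j"
      by (simp add: falling_fact2_even flip: xinvD_coeff_0_eq_bessel_coeff)
  qed
  finally show ?thesis .
qed

lemma xinvD_coeff_eq_A_coeff:
  assumes "1 \<le> i"
  shows "xinvD_coeff (2 * int (\<alpha> + 1)) (2 * \<alpha> + 4) i = A_coeff \<alpha> i"
  unfolding xinvD_coeff_even[OF assms] A_coeff_def sum_distrib_left
proof (rule sum.cong)
  show "{max i (2 * \<alpha> + 4 - (\<alpha> + 1))..2 * \<alpha> + 4} = {max i (\<alpha> + 3)..2 * \<alpha> + 4}"
    by (simp add: numeral_3_eq_3)
next
  fix j assume "j \<in> {max i (\<alpha> + 3)..2 * \<alpha> + 4}"
  then have j: "i \<le> j" "\<alpha> + 3 \<le> j" "j \<le> 2 * \<alpha> + 4" by auto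
  have "i - 1 + 2 * (j - i) = 2 * j - i - 1" and "\<alpha> + 1 + j - (2 * \<alpha> + 4) = j - \<alpha> - 3"
    using j assms by auto
  moreover have "(-1::real) ^ (i + j) = (-1) ^ (j - i)"
    using j by (auto simp: minus_one_power_iff even_diff_nat add.commute)
  moreover have "(2::real) powi (int i - 2 * int j + 2 * int \<alpha> + 4)
                   = 2 ^ (2 * \<alpha> + 4 - j) / 2 ^ (j - i)"
  proof -
    have "int i - 2 * int j + 2 * int \<alpha> + 4 = int (2 * \<alpha> + 4 - j) - int (j - i)"
      using j by simp
    then show ?thesis
      by (simp add: power_int_diff)
  qed
  ultimately show "real (2 * \<alpha> + 4 choose j)
          * (2 ^ (2 * \<alpha> + 4 - j) * fact (\<alpha> + 1) / fact (\<alpha> + 1 + j - (2 * \<alpha> + 4)))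
          * bessel_coeff (i - 1) (j - i)
      = fact (\<alpha> + 1) / fact (i - 1) * ((-1) ^ (i + j) * real (2 * \<alpha> + 4 choose j)
          * (fact (2 * j - i - 1) * 2 powi (int i - 2 * int j + 2 * int \<alpha> + 4))
          / (fact (j - \<alpha> - 3) * fact (j - i)))"
    by (simp add: bessel_coeff_def divide_simps)
qed

theorem corollary5p2:
  fixes \<alpha> :: nat and y :: "real \<Rightarrow> real" and x :: real
  assumes "Ck_on (2*\<alpha>+4) {0<..} y"
    and "x > 0"
  shows "(-1) ^ (\<alpha>+1) * x^2 * xinvD_pow (2*\<alpha>+4) (\<lambda>t. t ^ (2*\<alpha>+2) * y t) x
       = (-1) ^ (\<alpha>+1) * (\<Sum>i = 1..2*\<alpha>+4.
            A_coeff \<alpha> i * x powi (int i - 2*int \<alpha> - 4) * Dn i y x)"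
proof -
  let ?N = "2 * \<alpha> + 4" and ?p = "2 * int (\<alpha> + 1)"
  let ?term = "\<lambda>i. xinvD_coeff ?p ?N i * (x\<^sup>2 * x powi (?p - 2 * int ?N + int i)) * Dn i y x"
  have diff: "\<And>i t. i < ?N \<Longrightarrow> t > 0 \<Longrightarrow> Dn i y differentiable (at t)"
    using assms(1) by (auto simp: Ck_on_def)
  have "?p = int (2 * \<alpha> + 2)"
    by simp
  then have "x\<^sup>2 * xinvD_pow ?N (\<lambda>t. t ^ (2 * \<alpha> + 2) * y t) x = (\<Sum>i\<le>?N. ?term i)"
    using xinvD_pow_powi_mult[OF diff assms(2), where p = ?p]
    by (simp only: power_int_of_nat sum_distrib_left ac_simps)
  also have "\<dots> = ?term 0 + (\<Sum>i = 1..?N. ?term i)"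
    by (simp only: atMost_atLeast0 sum.atLeast_Suc_atMost[OF le0] One_nat_def)
  also have "\<dots> = (\<Sum>i = 1..?N. A_coeff \<alpha> i * x powi (int i - 2 * int \<alpha> - 4) * Dn i y x)"
  proof -
    have term_0: "?term 0 = 0"
      using xinvD_coeff_even_0[of "\<alpha> + 1" ?N] by simp
    have term_A: "?term i = A_coeff \<alpha> i * x powi (int i - 2 * int \<alpha> - 4) * Dn i y x"
      if "i \<in> {1..?N}" for i
      using that assms(2) xinvD_coeff_eq_A_coeff[of i \<alpha>]
        power_int_add[of x 2 "?p - 2 * int ?N + int i"] by (simp add: algebra_simps)
    show ?thesis
      unfolding term_0 add_0_left by (rule sum.cong[OF refl term_A])
  qed
  finally show ?thesis
    by (simp add: mult.assoc)
qed

end
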